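(* For every integer $N\ge 2$, every $\delta<0$ and every $\theta\in\mathbb{R}$, $$\lim_{\beta\to+\infty}E_r(\theta)=\begin{cases}\frac{N^2\theta}{2}\Big(\frac{1}{N-1}+H_N\Big) & \theta<-\delta,\\ N^2\theta H_N & \theta=-\delta,\\ \frac{N^2\theta}{2}\big(1+H_N\big) & \theta>-\delta,\end{cases}\qquad \lim_{\beta\to+\infty}E_p(\theta)=\begin{cases}\frac{N^2\theta}{2}\big(1+H_N\big) & \theta<-\delta,\\ N^2\theta H_N & \theta=-\delta,\\ \frac{N^2\theta}{2}\Big(H_N+\frac{1}{N-1}\Big) & \theta>-\delta.\end{cases}$$
   Context: Fix an integer $N\ge 2$ and $\delta<0$. For $\beta>0$ and $\theta\in\mathbb{R}$ put $x=\beta(\theta+\delta)$; for $1\le i\le N-1$ define $u_{i,i+1}=\frac{i(N-i)}{N^2}(1+e^{-x})^{-1}$, $u_{i,i-1}=\frac{i(N-i)}{N^2}(1+e^{x})^{-1}$, $u_{i,i}=1-u_{i,i+1}-u_{i,i-1}$, $u_{i,j}=0$ for $|i-j|\ge2$; let $U=(u_{ij})_{i,j=1}^{N-1}$, $(n_{ij})_{i,j=1}^{N-1}=(I-U)^{-1}$, and $E_r(\theta)=\frac{\theta}{2}\sum_{i=1}^{N-1}(n_{1i}+n_{N-1,i})\,i$, $E_p(\theta)=\frac{\theta}{2}\sum_{i=1}^{N-1}(n_{1i}+n_{N-1,i})(N-i)$ (these depend on $\beta$). Here $H_N=\sum_{j=1}^{N-1}\frac1j$. *)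

theory Defs
  imports Complex_Main "Jordan_Normal_Form.Gauss_Jordan_Elimination"
begin

(* Transition probabilities u_{ij}, indices i,j in {1..N-1}; x = beta*(theta+delta). *)
definition u_entry :: "nat \<Rightarrow> real \<Rightarrow> nat \<Rightarrow> nat \<Rightarrow> real" where
  "u_entry N x i j =
     (let c = real (i * (N - i)) / (real N)^2;
          up = c / (1 + exp (- x));
          down = c / (1 + exp x)
      in if j = i + 1 then up
         else if j + 1 = i then down
         else if j = i then 1 - up - down
         else 0)"

(* U as an (N-1)x(N-1) matrix; 0-based entry (a,b) stores u_{a+1,b+1} *)
definition U_mat :: "nat \<Rightarrow> real \<Rightarrow> real \<Rightarrow> real \<Rightarrow> real mat" where
  "U_mat N delta beta theta =
     mat (N - 1) (N - 1) (\<lambda>(a, b). u_entry N (beta * (theta + delta)) (a + 1) (b + 1))"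

(* fundamental matrix (I - U)^{-1}; 0-based entry (a,b) stores n_{a+1,b+1} *)
definition fund_mat :: "nat \<Rightarrow> real \<Rightarrow> real \<Rightarrow> real \<Rightarrow> real mat" where
  "fund_mat N delta beta theta =
     the (mat_inverse (1\<^sub>m (N - 1) - U_mat N delta beta theta))"

(* n_{ij} for 1 <= i,j <= N-1 *)
definition nn :: "nat \<Rightarrow> real \<Rightarrow> real \<Rightarrow> real \<Rightarrow> nat \<Rightarrow> nat \<Rightarrow> real" where
  "nn N delta beta theta i j = fund_mat N delta beta theta $$ (i - 1, j - 1)"

definition E_r :: "nat \<Rightarrow> real \<Rightarrow> real \<Rightarrow> real \<Rightarrow> real" where
  "E_r N delta beta theta = theta / 2 *
     (\<Sum>i = 1..N - 1. (nn N delta beta theta 1 i + nn N delta beta theta (N - 1) i) * real i)"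

definition E_p :: "nat \<Rightarrow> real \<Rightarrow> real \<Rightarrow> real \<Rightarrow> real" where
  "E_p N delta beta theta = theta / 2 *
     (\<Sum>i = 1..N - 1. (nn N delta beta theta 1 i + nn N delta beta theta (N - 1) i) * real (N - i))"

definition harm :: "nat \<Rightarrow> real" where
  "harm N = (\<Sum>j = 1..N - 1. 1 / real j)"

end

theory Submission
  imports Defs "Jordan_Normal_Form.Determinant" "HOL-Real_Asymp.Real_Asymp"
begin

text \<open>
  The matrix I - U depends on \<beta> only through the up-probability p = 1/(1 + exp(-x)), which
  tends to 1, 1/2 or 0 according as \<theta> + \<delta> is positive, zero or negative. Matrix inversion is
  continuous at invertible matrices (Cramer's rule), so the fundamental matrix converges to the
  inverse of the limiting I - U. In the three limits the chain is a pure upward walk, a symmetric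
  walk or a pure downward walk, each slowed down by the holding probabilities 1 - c(j) with
  c(j) = j (N - j) / N^2, and its Green's function is explicit. Since j / c(j) = N^2 / (N - j)
  and (N - j) / c(j) = N^2 / j, the weighted row sums defining E_r and E_p become harmonic numbers.
\<close>

lemma tendsto_det:
  fixes A :: "'a \<Rightarrow> 'b::real_normed_field mat"
  assumes "\<And>t. A t \<in> carrier_mat n n" and "L \<in> carrier_mat n n"
    and "\<And>i j. i < n \<Longrightarrow> j < n \<Longrightarrow> ((\<lambda>t. A t $$ (i, j)) \<longlongrightarrow> L $$ (i, j)) F"
  shows "((\<lambda>t. det (A t)) \<longlongrightarrow> det L) F"
  unfolding det_def'[OF assms(1)] det_def'[OF assms(2)]
  by (intro tendsto_intros assms(3)) (auto simp: permutes_in_image)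

lemma tendsto_cofactor:
  fixes A :: "'a \<Rightarrow> 'b::real_normed_field mat"
  assumes A: "\<And>t. A t \<in> carrier_mat n n" and L: "L \<in> carrier_mat n n"
    and lim: "\<And>i j. i < n \<Longrightarrow> j < n \<Longrightarrow> ((\<lambda>t. A t $$ (i, j)) \<longlongrightarrow> L $$ (i, j)) F"
    and "i < n" "j < n"
  shows "((\<lambda>t. cofactor (A t) i j) \<longlongrightarrow> cofactor L i j) F"
proof -
  have "((\<lambda>t. det (mat_delete (A t) i j)) \<longlongrightarrow> det (mat_delete L i j)) F"
  proof (rule tendsto_det)
    show "\<And>t. mat_delete (A t) i j \<in> carrier_mat (n - 1) (n - 1)" "mat_delete L i j \<in> carrier_mat (n - 1) (n - 1)"
      using A L by (blast intro: mat_delete_carrier)+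
    fix a b assume "a < n - 1" "b < n - 1"
    moreover have "\<And>t. dim_row (A t) = n \<and> dim_col (A t) = n"
      using A by blast
    ultimately show "((\<lambda>t. mat_delete (A t) i j $$ (a, b)) \<longlongrightarrow> mat_delete L i j $$ (a, b)) F"
      using L by (simp add: mat_delete_def) (intro conjI impI lim; simp)
  qed
  then show ?thesis
    unfolding cofactor_def by (intro tendsto_intros)
qed

lemma right_inverse_entry_cofactor:
  fixes A :: "'a::field mat"
  assumes A: "A \<in> carrier_mat n n" and B: "B \<in> carrier_mat n n" and AB: "A * B = 1\<^sub>m n"
    and ij: "i < n" "j < n"
  shows "B $$ (i, j) = cofactor A j i / det A"
proof -
  have "det A * det B = 1"
    using det_mult[OF A B] AB by simp
  then have "det A \<noteq> 0" by auto
  have "adj_mat A = adj_mat A * (A * B)"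
    using AB adj_mat(1)[OF A] by simp
  also have "\<dots> = (adj_mat A * A) * B"
    using adj_mat(1)[OF A] A B by (simp add: assoc_mult_mat)
  also have "\<dots> = det A \<cdot>\<^sub>m B"
    using adj_mat(3)[OF A] B by (simp add: mult_smult_assoc_mat[OF one_carrier_mat B])
  finally have "cofactor A j i = det A * B $$ (i, j)"
    using ij A B by (metis adj_mat_def carrier_matD index_mat(1) index_smult_mat(1) split_conv)
  with \<open>det A \<noteq> 0\<close> show ?thesis by simp
qed

lemma tendsto_mat_inverse:
  fixes A :: "'a \<Rightarrow> 'b::real_normed_field mat"
  assumes A: "\<And>t. A t \<in> carrier_mat n n" and L: "L \<in> carrier_mat n n"
    and B: "B \<in> carrier_mat n n" and LB: "L * B = 1\<^sub>m n"
    and lim: "\<And>i j. i < n \<Longrightarrow> j < n \<Longrightarrow> ((\<lambda>t. A t $$ (i, j)) \<longlongrightarrow> L $$ (i, j)) F"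
    and ij: "i < n" "j < n"
  shows "((\<lambda>t. the (mat_inverse (A t)) $$ (i, j)) \<longlongrightarrow> B $$ (i, j)) F"
proof -
  have det_lim: "((\<lambda>t. det (A t)) \<longlongrightarrow> det L) F"
    by (rule tendsto_det[OF A L lim])
  have "det L \<noteq> 0"
    using det_mult[OF L B] LB by auto
  have "\<forall>\<^sub>F t in F. the (mat_inverse (A t)) $$ (i, j) = cofactor (A t) j i / det (A t)"
  proof (rule eventually_mono[OF tendsto_imp_eventually_ne[OF det_lim \<open>det L \<noteq> 0\<close>]])
    fix t assume "det (A t) \<noteq> 0"
    then obtain C where C: "mat_inverse (A t) = Some C"
      using mat_inverse(1)[OF A, of t undefined] det_non_zero_imp_unit[OF A] by fastforce
    with mat_inverse(2)[OF A C] ij show "the (mat_inverse (A t)) $$ (i, j) = cofactor (A t) j i / det (A t)"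
      by (simp add: right_inverse_entry_cofactor[OF A])
  qed
  moreover have "((\<lambda>t. cofactor (A t) j i / det (A t)) \<longlongrightarrow> cofactor L j i / det L) F"
    by (intro tendsto_divide det_lim tendsto_cofactor[OF A L lim] \<open>det L \<noteq> 0\<close> ij)
  ultimately show ?thesis
    using right_inverse_entry_cofactor[OF L B LB ij] tendsto_cong by fastforce
qed

lemma sum_tridiagonal:
  fixes M :: "nat \<Rightarrow> 'a::comm_monoid_add"
  assumes a: "a < n" and M: "\<And>k. k < n \<Longrightarrow> k \<noteq> a \<Longrightarrow> k \<noteq> a + 1 \<Longrightarrow> k + 1 \<noteq> a \<Longrightarrow> M k = 0"
  shows "(\<Sum>k<n. M k) = M a + (if a + 1 < n then M (a + 1) else 0) + (if 0 < a then M (a - 1) else 0)"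
proof -
  let ?S = "{k. k < n \<and> (k = a \<or> k = a + 1 \<or> k + 1 = a)}"
  have "(\<Sum>k<n. M k) = (\<Sum>k\<in>?S. M k)"
    by (rule sum.mono_neutral_right) (use M in auto)
  also have "?S = {a} \<union> (if a + 1 < n then {a + 1} else {}) \<union> (if 0 < a then {a - 1} else {})"
    using a by auto
  finally show ?thesis
    by (simp add: sum.union_disjoint add_ac)
qed

definition move_prob :: "nat \<Rightarrow> nat \<Rightarrow> real" where
  "move_prob N i = real i * (real N - real i) / (real N)\<^sup>2"

definition walk_entry :: "nat \<Rightarrow> real \<Rightarrow> nat \<Rightarrow> nat \<Rightarrow> real" where
  "walk_entry N p i j =
     (if j = i + 1 then move_prob N i * p
      else if j + 1 = i then move_prob N i * (1 - p)
      else if j = i then 1 - move_prob N i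
      else 0)"

definition id_minus_walk :: "nat \<Rightarrow> real \<Rightarrow> real mat" where
  "id_minus_walk N p = 1\<^sub>m (N - 1) - mat (N - 1) (N - 1) (\<lambda>(a, b). walk_entry N p (a + 1) (b + 1))"

definition one_based_mat :: "nat \<Rightarrow> (nat \<Rightarrow> nat \<Rightarrow> real) \<Rightarrow> real mat" where
  "one_based_mat N f = mat (N - 1) (N - 1) (\<lambda>(a, b). f (a + 1) (b + 1))"

lemma move_prob_pos: "0 < i \<Longrightarrow> i < N \<Longrightarrow> 0 < move_prob N i"
  unfolding move_prob_def by simp

lemma u_entry_eq_walk_entry:
  assumes "i \<le> N"
  shows "u_entry N x i j = walk_entry N (1 / (1 + exp (- x))) i j"
proof -
  have c: "real (i * (N - i)) / (real N)\<^sup>2 = move_prob N i"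
    using assms by (simp add: move_prob_def of_nat_diff)
  have "0 < 1 + exp x"
    by (simp add: add_pos_pos)
  then have "1 / (1 + exp x) = 1 - 1 / (1 + exp (- x))"
    by (simp add: exp_minus divide_simps)
  then have down: "move_prob N i / (1 + exp x) = move_prob N i * (1 - 1 / (1 + exp (- x)))"
    by (metis times_divide_eq_right mult_1_right)
  show ?thesis
    unfolding u_entry_def walk_entry_def Let_def c down by (simp add: algebra_simps)
qed

lemma fund_mat_eq_inverse_id_minus_walk:
  "fund_mat N delta beta theta =
     the (mat_inverse (id_minus_walk N (1 / (1 + exp (- (beta * (theta + delta)))))))"
proof -
  have "U_mat N delta beta theta =
      mat (N - 1) (N - 1) (\<lambda>(a, b). walk_entry N (1 / (1 + exp (- (beta * (theta + delta))))) (a + 1) (b + 1))"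
    unfolding U_mat_def by (rule cong_mat) (auto simp: u_entry_eq_walk_entry)
  then show ?thesis
    unfolding fund_mat_def id_minus_walk_def by simp
qed

lemma id_minus_walk_carrier: "id_minus_walk N p \<in> carrier_mat (N - 1) (N - 1)"
  unfolding id_minus_walk_def by (simp add: minus_carrier_mat)

lemma one_based_mat_carrier: "one_based_mat N f \<in> carrier_mat (N - 1) (N - 1)"
  unfolding one_based_mat_def by simp

lemma tendsto_id_minus_walk:
  assumes "(g \<longlongrightarrow> p) F" "a < N - 1" "b < N - 1"
  shows "((\<lambda>t. id_minus_walk N (g t) $$ (a, b)) \<longlongrightarrow> id_minus_walk N p $$ (a, b)) F"
  using assms unfolding id_minus_walk_def walk_entry_def by (auto intro!: tendsto_intros)

lemma id_minus_walk_mult_eq_one: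
  assumes recurrence: "\<And>i j. 0 < i \<Longrightarrow> i < N \<Longrightarrow> 0 < j \<Longrightarrow> j < N \<Longrightarrow>
      move_prob N i * (f i j - p * f (i + 1) j - (1 - p) * f (i - 1) j) = (if i = j then 1 else 0)"
    and top: "\<And>j. 0 < j \<Longrightarrow> j < N \<Longrightarrow> p * f N j = 0"
    and bottom: "\<And>j. 0 < j \<Longrightarrow> j < N \<Longrightarrow> (1 - p) * f 0 j = 0"
  shows "id_minus_walk N p * one_based_mat N f = 1\<^sub>m (N - 1)"
proof (rule eq_matI)
  fix a b assume "a < dim_row (1\<^sub>m (N - 1))" "b < dim_col (1\<^sub>m (N - 1))"
  then have a: "a < N - 1" and b: "b < N - 1" by auto
  let ?c = "move_prob N (a + 1)" and ?A = "id_minus_walk N p"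
  have A: "?A $$ (a, k) = (if a = k then 1 else 0) - walk_entry N p (a + 1) (k + 1)" if "k < N - 1" for k
    using a that by (simp add: id_minus_walk_def)
  have "(?A * one_based_mat N f) $$ (a, b) = (\<Sum>k<N - 1. ?A $$ (a, k) * f (k + 1) (b + 1))"
    using a b by (simp add: id_minus_walk_def one_based_mat_def scalar_prod_def sum.atLeast0_lessThan_Suc lessThan_atLeast0)
  also have "\<dots> = ?A $$ (a, a) * f (a + 1) (b + 1)
      + (if a + 1 < N - 1 then ?A $$ (a, a + 1) * f (a + 2) (b + 1) else 0)
      + (if 0 < a then ?A $$ (a, a - 1) * f a (b + 1) else 0)"
    by (subst sum_tridiagonal[OF a]) (auto simp: A walk_entry_def)
  also have "\<dots> = ?c * (f (a + 1) (b + 1) - p * f (a + 2) (b + 1) - (1 - p) * f a (b + 1))"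
  proof -
    have "\<not> a + 1 < N - 1 \<Longrightarrow> p * f (a + 2) (b + 1) = 0"
      using a b top[of "b + 1"] by (subgoal_tac "a + 2 = N") auto
    moreover have "\<not> 0 < a \<Longrightarrow> (1 - p) * f a (b + 1) = 0"
      using b bottom[of "b + 1"] by auto
    ultimately show ?thesis
      using a by (auto simp: A walk_entry_def algebra_simps)
  qed
  also have "\<dots> = 1\<^sub>m (N - 1) $$ (a, b)"
    using a b recurrence[of "a + 1" "b + 1"] by simp
  finally show "(?A * one_based_mat N f) $$ (a, b) = 1\<^sub>m (N - 1) $$ (a, b)" .
qed (simp_all add: id_minus_walk_def one_based_mat_def)

lemma tendsto_fund_mat:
  assumes p: "((\<lambda>beta. 1 / (1 + exp (- (beta * (theta + delta))))) \<longlongrightarrow> p) at_top"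
    and inverse: "id_minus_walk N p * one_based_mat N f = 1\<^sub>m (N - 1)"
    and "0 < i" "i < N" "0 < j" "j < N"
  shows "((\<lambda>beta. nn N delta beta theta i j) \<longlongrightarrow> f i j) at_top"
proof -
  have "((\<lambda>beta. fund_mat N delta beta theta $$ (i - 1, j - 1)) \<longlongrightarrow> one_based_mat N f $$ (i - 1, j - 1)) at_top"
    unfolding fund_mat_eq_inverse_id_minus_walk
    by (rule tendsto_mat_inverse[OF id_minus_walk_carrier id_minus_walk_carrier one_based_mat_carrier
          inverse tendsto_id_minus_walk[OF p]]) (use assms in auto)
  with assms show ?thesis
    by (simp add: nn_def one_based_mat_def)
qed

lemma tendsto_E_r_E_p:
  assumes p: "((\<lambda>beta. 1 / (1 + exp (- (beta * (theta + delta))))) \<longlongrightarrow> p) at_top"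
    and inverse: "id_minus_walk N p * one_based_mat N f = 1\<^sub>m (N - 1)"
  shows "((\<lambda>beta. E_r N delta beta theta) \<longlongrightarrow> theta / 2 * (\<Sum>i = 1..N - 1. (f 1 i + f (N - 1) i) * real i)) at_top"
    and "((\<lambda>beta. E_p N delta beta theta) \<longlongrightarrow> theta / 2 * (\<Sum>i = 1..N - 1. (f 1 i + f (N - 1) i) * real (N - i))) at_top"
  unfolding E_r_def E_p_def
  by (intro tendsto_intros tendsto_fund_mat[OF p inverse]; auto)+

definition green_up :: "nat \<Rightarrow> nat \<Rightarrow> nat \<Rightarrow> real" where
  "green_up N i j = (if i \<le> j then 1 / move_prob N j else 0)"

definition green_down :: "nat \<Rightarrow> nat \<Rightarrow> nat \<Rightarrow> real" where
  "green_down N i j = (if j \<le> i then 1 / move_prob N j else 0)"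

text \<open>Green's function 2 min(i,j) (N - max(i,j)) / N of the simple symmetric walk absorbed at 0 and N,
  rescaled by the mean holding time 1 / c(j) at j.\<close>

definition green_sym :: "nat \<Rightarrow> nat \<Rightarrow> nat \<Rightarrow> real" where
  "green_sym N i j =
     2 * (if i \<le> j then real i * (real N - real j) else real j * (real N - real i)) / (real N * move_prob N j)"

lemma id_minus_walk_up_inverse: "id_minus_walk N 1 * one_based_mat N (green_up N) = 1\<^sub>m (N - 1)"
proof (rule id_minus_walk_mult_eq_one)
  fix i j :: nat assume "0 < i" "i < N" "0 < j" "j < N"
  then show "move_prob N i * (green_up N i j - 1 * green_up N (i + 1) j - (1 - 1) * green_up N (i - 1) j)
      = (if i = j then 1 else 0)"
    using move_prob_pos[of i N] by (auto simp: green_up_def)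
qed (auto simp: green_up_def)

lemma id_minus_walk_down_inverse: "id_minus_walk N 0 * one_based_mat N (green_down N) = 1\<^sub>m (N - 1)"
proof (rule id_minus_walk_mult_eq_one)
  fix i j :: nat assume "0 < i" "i < N" "0 < j" "j < N"
  then show "move_prob N i * (green_down N i j - 0 * green_down N (i + 1) j - (1 - 0) * green_down N (i - 1) j)
      = (if i = j then 1 else 0)"
    using move_prob_pos[of i N] move_prob_pos[of j N] by (auto simp: green_down_def)
qed (auto simp: green_down_def)

lemma id_minus_walk_sym_inverse: "id_minus_walk N (1 / 2) * one_based_mat N (green_sym N) = 1\<^sub>m (N - 1)"
proof (rule id_minus_walk_mult_eq_one)
  fix i j :: nat assume ij: "0 < i" "i < N" "0 < j" "j < N"
  have pos: "0 < move_prob N j" "0 < real N"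
    using ij by (auto intro: move_prob_pos)
  have pred: "real (i - 1) = real i - 1"
    using ij by (simp add: of_nat_diff)
  consider "i < j" | "i = j" | "i = j + 1" | "j + 1 < i"
    by linarith
  then show "move_prob N i * (green_sym N i j - 1 / 2 * green_sym N (i + 1) j - (1 - 1 / 2) * green_sym N (i - 1) j)
      = (if i = j then 1 else 0)"
  proof cases
    case 1
    then have "i + 1 \<le> j" "i - 1 \<le> j" by auto
    with 1 pos show ?thesis unfolding green_sym_def pred by (simp add: field_simps)
  next
    case 2
    then have "\<not> i + 1 \<le> j" "i - 1 \<le> j" by auto
    with 2 pos show ?thesis unfolding green_sym_def pred by (simp add: field_simps)
  next
    case 3
    then have "\<not> i + 1 \<le> j" "\<not> i \<le> j" "i - 1 \<le> j" by auto
    with 3 pos show ?thesis unfolding green_sym_def pred by (simp add: field_simps)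
  next
    case 4
    then have "\<not> i + 1 \<le> j" "\<not> i \<le> j" "\<not> i - 1 \<le> j" by auto
    with pos show ?thesis unfolding green_sym_def pred by (simp add: field_simps)
  qed
qed (auto simp: green_sym_def)


lemma harm_reflect: "(\<Sum>i = 1..N - 1. 1 / (real N - real i)) = harm N"
  unfolding harm_def
  by (rule sum.reindex_bij_witness[of _ "\<lambda>j. N - j" "\<lambda>j. N - j"]) (auto simp: of_nat_diff)

lemma sum_div_move_prob_up: "(\<Sum>i = 1..N - 1. real i / move_prob N i) = (real N)\<^sup>2 * harm N"
proof -
  have "(\<Sum>i = 1..N - 1. real i / move_prob N i) = (\<Sum>i = 1..N - 1. (real N)\<^sup>2 * (1 / (real N - real i)))"
    by (rule sum.cong) (auto simp: move_prob_def)
  also have "\<dots> = (real N)\<^sup>2 * harm N"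
    by (simp only: sum_distrib_left[symmetric] harm_reflect)
  finally show ?thesis .
qed

lemma sum_div_move_prob_down: "(\<Sum>i = 1..N - 1. real (N - i) / move_prob N i) = (real N)\<^sup>2 * harm N"
proof -
  have "(\<Sum>i = 1..N - 1. real (N - i) / move_prob N i) = (\<Sum>i = 1..N - 1. (real N)\<^sup>2 * (1 / real i))"
    by (rule sum.cong) (auto simp: move_prob_def of_nat_diff)
  also have "\<dots> = (real N)\<^sup>2 * harm N"
    by (simp only: sum_distrib_left[symmetric] harm_def)
  finally show ?thesis .
qed

lemma sum_div_move_prob_bump:
  assumes "k \<in> {1..N - 1}"
  shows "(\<Sum>i = 1..N - 1. (1 + (if i = k then 1 else 0)) / move_prob N i * w i)
       = (\<Sum>i = 1..N - 1. w i / move_prob N i) + w k / move_prob N k"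
proof -
  have "(\<Sum>i = 1..N - 1. (1 + (if i = k then 1 else 0)) / move_prob N i * w i)
      = (\<Sum>i = 1..N - 1. w i / move_prob N i + (if i = k then w k / move_prob N k else 0))"
    by (rule sum.cong) auto
  with assms show ?thesis
    by (simp add: sum.distrib)
qed


lemma sum_green_up_ends:
  assumes "2 \<le> N"
  shows "(\<Sum>i = 1..N - 1. (green_up N 1 i + green_up N (N - 1) i) * w i)
       = (\<Sum>i = 1..N - 1. w i / move_prob N i) + w (N - 1) / move_prob N (N - 1)"
proof -
  have "(\<Sum>i = 1..N - 1. (green_up N 1 i + green_up N (N - 1) i) * w i)
      = (\<Sum>i = 1..N - 1. (1 + (if i = N - 1 then 1 else 0)) / move_prob N i * w i)"
    by (rule sum.cong) (auto simp: green_up_def add_divide_distrib)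
  also have "\<dots> = (\<Sum>i = 1..N - 1. w i / move_prob N i) + w (N - 1) / move_prob N (N - 1)"
    by (rule sum_div_move_prob_bump) (use assms in auto)
  finally show ?thesis .
qed

lemma sum_green_down_ends:
  assumes "2 \<le> N"
  shows "(\<Sum>i = 1..N - 1. (green_down N 1 i + green_down N (N - 1) i) * w i)
       = (\<Sum>i = 1..N - 1. w i / move_prob N i) + w 1 / move_prob N 1"
proof -
  have "(\<Sum>i = 1..N - 1. (green_down N 1 i + green_down N (N - 1) i) * w i)
      = (\<Sum>i = 1..N - 1. (1 + (if i = 1 then 1 else 0)) / move_prob N i * w i)"
    by (rule sum.cong) (auto simp: green_down_def add_divide_distrib)
  also have "\<dots> = (\<Sum>i = 1..N - 1. w i / move_prob N i) + w 1 / move_prob N 1"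
    by (rule sum_div_move_prob_bump) (use assms in auto)
  finally show ?thesis .
qed

lemma sum_green_sym_ends:
  "(\<Sum>i = 1..N - 1. (green_sym N 1 i + green_sym N (N - 1) i) * w i)
       = 2 * (\<Sum>i = 1..N - 1. w i / move_prob N i)"
  unfolding sum_distrib_left
proof (rule sum.cong)
  fix i assume i: "i \<in> {1..N - 1}"
  then have "0 < move_prob N i" "0 < real N"
    by (auto intro: move_prob_pos)
  with i have "green_sym N 1 i + green_sym N (N - 1) i = 2 / move_prob N i"
    by (auto simp: green_sym_def field_simps of_nat_diff)
  then show "(green_sym N 1 i + green_sym N (N - 1) i) * w i = 2 * (w i / move_prob N i)"
    by simp
qed simp

lemma E_limits_below_threshold:
  assumes "2 \<le> N" "theta + delta < 0"
  shows "((\<lambda>beta. E_r N delta beta theta) \<longlongrightarrow> (real N)\<^sup>2 * theta / 2 * (1 / (real N - 1) + harm N)) at_top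
       \<and> ((\<lambda>beta. E_p N delta beta theta) \<longlongrightarrow> (real N)\<^sup>2 * theta / 2 * (1 + harm N)) at_top"
proof -
  have "((\<lambda>beta. 1 / (1 + exp (- (beta * (theta + delta))))) \<longlongrightarrow> 0) at_top"
    using assms(2) by real_asymp
  note limits = tendsto_E_r_E_p[OF this id_minus_walk_down_inverse[of N]]
  have c: "move_prob N 1 = (real N - 1) / (real N)\<^sup>2"
    by (simp add: move_prob_def)
  have E_r_value: "theta / 2 * (\<Sum>i = 1..N - 1. (green_down N 1 i + green_down N (N - 1) i) * real i)
      = (real N)\<^sup>2 * theta / 2 * (1 / (real N - 1) + harm N)"
    unfolding sum_green_down_ends[OF assms(1)] sum_div_move_prob_up c using assms(1) by (simp add: field_simps of_nat_diff)
  have E_p_value: "theta / 2 * (\<Sum>i = 1..N - 1. (green_down N 1 i + green_down N (N - 1) i) * real (N - i))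
      = (real N)\<^sup>2 * theta / 2 * (1 + harm N)"
    unfolding sum_green_down_ends[OF assms(1)] sum_div_move_prob_down c using assms(1) by (simp add: field_simps of_nat_diff)
  show ?thesis
    using limits unfolding E_r_value E_p_value ..
qed

lemma E_limits_above_threshold:
  assumes "2 \<le> N" "0 < theta + delta"
  shows "((\<lambda>beta. E_r N delta beta theta) \<longlongrightarrow> (real N)\<^sup>2 * theta / 2 * (1 + harm N)) at_top
       \<and> ((\<lambda>beta. E_p N delta beta theta) \<longlongrightarrow> (real N)\<^sup>2 * theta / 2 * (harm N + 1 / (real N - 1))) at_top"
proof -
  have "((\<lambda>beta. 1 / (1 + exp (- (beta * (theta + delta))))) \<longlongrightarrow> 1) at_top"
    using assms(2) by real_asymp
  note limits = tendsto_E_r_E_p[OF this id_minus_walk_up_inverse[of N]]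
  have c: "move_prob N (N - 1) = (real N - 1) / (real N)\<^sup>2"
    using assms(1) by (simp add: move_prob_def of_nat_diff)
  have E_r_value: "theta / 2 * (\<Sum>i = 1..N - 1. (green_up N 1 i + green_up N (N - 1) i) * real i)
      = (real N)\<^sup>2 * theta / 2 * (1 + harm N)"
    unfolding sum_green_up_ends[OF assms(1)] sum_div_move_prob_up c using assms(1) by (simp add: field_simps of_nat_diff)
  have E_p_value: "theta / 2 * (\<Sum>i = 1..N - 1. (green_up N 1 i + green_up N (N - 1) i) * real (N - i))
      = (real N)\<^sup>2 * theta / 2 * (harm N + 1 / (real N - 1))"
    unfolding sum_green_up_ends[OF assms(1)] sum_div_move_prob_down c using assms(1) by (simp add: field_simps of_nat_diff)
  show ?thesis
    using limits unfolding E_r_value E_p_value ..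
qed

lemma E_limits_at_threshold:
  assumes "theta + delta = 0"
  shows "((\<lambda>beta. E_r N delta beta theta) \<longlongrightarrow> (real N)\<^sup>2 * theta * harm N) at_top
       \<and> ((\<lambda>beta. E_p N delta beta theta) \<longlongrightarrow> (real N)\<^sup>2 * theta * harm N) at_top"
proof -
  have "((\<lambda>beta. 1 / (1 + exp (- (beta * (theta + delta))))) \<longlongrightarrow> 1 / 2) at_top"
    using assms by simp
  from tendsto_E_r_E_p[OF this id_minus_walk_sym_inverse[of N]] show ?thesis
    unfolding sum_green_sym_ends sum_div_move_prob_up sum_div_move_prob_down by (simp add: mult_ac)
qed

theorem theorem1:
  fixes N :: nat and delta theta :: real
  assumes "N \<ge> 2" and "delta < 0"
  shows "((\<lambda>beta. E_r N delta beta theta) \<longlongrightarrow>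
           (if theta < - delta then (real N)^2 * theta / 2 * (1 / (real N - 1) + harm N)
            else if theta = - delta then (real N)^2 * theta * harm N
            else (real N)^2 * theta / 2 * (1 + harm N))) at_top
       \<and> ((\<lambda>beta. E_p N delta beta theta) \<longlongrightarrow>
           (if theta < - delta then (real N)^2 * theta / 2 * (1 + harm N)
            else if theta = - delta then (real N)^2 * theta * harm N
            else (real N)^2 * theta / 2 * (harm N + 1 / (real N - 1)))) at_top"
proof -
  consider "theta + delta < 0" | "theta + delta = 0" | "0 < theta + delta"
    by linarith
  then show ?thesis
  proof cases
    case 1
    with E_limits_below_threshold[OF assms(1) this] show ?thesis by simp
  next
    case 2
    with E_limits_at_threshold[OF this] show ?thesis by simp
  next
    case 3
    with E_limits_above_threshold[OF assms(1) this] show ?thesis by simp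
  qed
qed

end
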